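(* Let $C>0$. There is a constant $C_1>0$ depending only on $C$ such that for any two mostly horizontal inclined to the right lines $l$ and $k$ with different slopes $a$ and $b$, $$N\bigl(s(l,C)\cap s(k,C)\bigr)\leqslant\frac{C_1}{|a-b|}.$$
   Context: For a line $l\subset\mathbb{R}^2$ and $C>0$, the $C$-strip is $s(l,C)=\{r\in\mathbb{R}^2\mid\rho(r,l)\leqslant C/2\}$, $\rho$ the Euclidean distance. A line is mostly horizontal inclined to the right if it has equation $y=ax+b$ with slope $0\leqslant a\leqslant1$. For $D\subseteq\mathbb{R}^2$, the integer cardinality is $N(D)=|\mathbb{Z}^2\cap D|$. *)

theory Defs
  imports "HOL-Analysis.Analysis"
begin

text \<open>Points of the plane are pairs of reals (the product metric on real \<times> real is Euclidean).\<close>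

definition line :: "real \<Rightarrow> real \<Rightarrow> (real \<times> real) set" where
  "line a b = {(x, y). y = a * x + b}"

definition strip :: "(real \<times> real) set \<Rightarrow> real \<Rightarrow> (real \<times> real) set" where
  "strip l C = {r. infdist r l \<le> C / 2}"

definition int_card :: "(real \<times> real) set \<Rightarrow> nat" where
  "int_card D = card {p :: int \<times> int. (real_of_int (fst p), real_of_int (snd p)) \<in> D}"

end

theory Submission
  imports Defs
begin

text \<open>Within a strip of width \<open>C\<close> around a line of slope at most \<open>1\<close> every point lies at
  vertical distance at most \<open>C\<close> from the line. A lattice point in the intersection of two
  such strips therefore has its abscissa within \<open>2C / \<bar>a - b\<bar>\<close> of the abscissa of the
  intersection point of the two lines, and above each admissible integer abscissa there are at
  most \<open>2C + 1\<close> admissible integer ordinates; the product of the two counts is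
  \<open>O(1 / \<bar>a - b\<bar>)\<close> because \<open>\<bar>a - b\<bar> \<le> 1\<close>.\<close>

definition lattice_points :: "(real \<times> real) set \<Rightarrow> (int \<times> int) set" where
  "lattice_points D = {p. (real_of_int (fst p), real_of_int (snd p)) \<in> D}"

lemma int_card_eq_card_lattice_points: "int_card D = card (lattice_points D)"
  by (simp add: int_card_def lattice_points_def)

lemma closed_line: "closed (line a c)"
proof -
  have "line a c = {p. snd p = a * fst p + c}" by (auto simp: line_def)
  moreover have "closed {p::real \<times> real. snd p = a * fst p + c}"
    by (intro closed_Collect_eq continuous_intros)
  ultimately show ?thesis by simp
qed

lemma strip_line_vertical_dist:
  assumes "(x, y) \<in> strip (line a c) C"
  shows "\<bar>y - a * x - c\<bar> \<le> (1 + \<bar>a\<bar>) * (C / 2)"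
proof -
  have "line a c \<noteq> {}" by (auto simp: line_def)
  then obtain q where q: "q \<in> line a c" "infdist (x, y) (line a c) = dist (x, y) q"
    using infdist_attains_inf[OF closed_line] by blast
  obtain u v where uv: "q = (u, v)" "v = a * u + c" using q(1) by (cases q) (simp add: line_def)
  have "dist (x, y) (u, v) \<le> C / 2" using assms q(2) uv(1) by (simp add: strip_def)
  then have "\<bar>x - u\<bar> \<le> C / 2" "\<bar>y - v\<bar> \<le> C / 2"
    using dist_fst_le[of "(x, y)" "(u, v)"] dist_snd_le[of "(x, y)" "(u, v)"]
    by (simp_all add: dist_real_def)
  moreover have "\<bar>a * (x - u)\<bar> \<le> \<bar>a\<bar> * (C / 2)"
    unfolding abs_mult using \<open>\<bar>x - u\<bar> \<le> C / 2\<close> by (rule mult_left_mono) simp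
  moreover have "\<bar>y - a * x - c\<bar> \<le> \<bar>y - v\<bar> + \<bar>a * (x - u)\<bar>"
    using abs_triangle_ineq4[of "y - v" "a * (x - u)"] uv(2) by (simp add: algebra_simps)
  ultimately show ?thesis by (simp add: distrib_right)
qed

lemma strip_line_vertical_dist_le:
  assumes "(x, y) \<in> strip (line a c) C" "\<bar>a\<bar> \<le> 1" "C \<ge> 0"
  shows "\<bar>y - a * x - c\<bar> \<le> C"
proof -
  have "(1 + \<bar>a\<bar>) * (C / 2) \<le> 2 * (C / 2)" using assms(2,3) by (intro mult_right_mono) auto
  then show ?thesis using strip_line_vertical_dist[OF assms(1)] by linarith
qed

lemma abs_sub_line_intersection_le:
  fixes a b c d x y :: real
  assumes "a \<noteq> b" "\<bar>y - a * x - c\<bar> \<le> h" "\<bar>y - b * x - d\<bar> \<le> h"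
  shows "\<bar>x - (d - c) / (a - b)\<bar> \<le> 2 * h / \<bar>a - b\<bar>"
proof -
  have "(a - b) * (x - (d - c) / (a - b)) = (y - b * x - d) - (y - a * x - c)"
    using assms(1) by (simp add: field_simps)
  then have "\<bar>a - b\<bar> * \<bar>x - (d - c) / (a - b)\<bar> \<le> 2 * h"
    using assms(2,3) by (simp add: abs_mult[symmetric])
  then show ?thesis using assms(1) by (simp add: pos_le_divide_eq mult.commute)
qed

lemma int_interval_eq_Icc: "{k::int. lo \<le> real_of_int k \<and> real_of_int k \<le> hi} = {\<lceil>lo\<rceil>..\<lfloor>hi\<rfloor>}"
  by (auto simp: ceiling_le_iff le_floor_iff)

lemma card_int_interval_le:
  "real (card {k::int. lo \<le> real_of_int k \<and> real_of_int k \<le> hi}) \<le> max 0 (hi - lo + 1)"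
  using of_int_floor_le[of hi] le_of_int_ceiling[of lo] by (simp add: int_interval_eq_Icc) linarith

lemma lattice_points_fibred_bound:
  assumes D: "\<And>x y. (x, y) \<in> D \<Longrightarrow> lo \<le> x \<and> x \<le> hi \<and> \<bar>y - f x\<bar> \<le> h" and "h \<ge> 0"
  shows "finite (lattice_points D)"
    and "real (card (lattice_points D)) \<le> max 0 (hi - lo + 1) * (2 * h + 1)"
proof -
  define X where "X = {k::int. lo \<le> real_of_int k \<and> real_of_int k \<le> hi}"
  define Y where "Y k = {m::int. f k - h \<le> real_of_int m \<and> real_of_int m \<le> f k + h}" for k :: int
  have finite: "finite X" "\<And>k. finite (Y k)" by (simp_all add: X_def Y_def int_interval_eq_Icc)
  have "lattice_points D \<subseteq> Sigma X Y"
    by (force simp: lattice_points_def X_def Y_def abs_le_iff dest: D)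
  then show "finite (lattice_points D)" using finite by (meson finite_SigmaI finite_subset)
  have "card (lattice_points D) \<le> card (Sigma X Y)"
    using \<open>lattice_points D \<subseteq> Sigma X Y\<close> finite by (intro card_mono) auto
  then have "real (card (lattice_points D)) \<le> (\<Sum>k\<in>X. real (card (Y k)))"
    using finite by (simp flip: of_nat_sum)
  also have "\<dots> \<le> (\<Sum>k\<in>X. max 0 (2 * h + 1))"
  proof (rule sum_mono)
    fix k
    show "real (card (Y k)) \<le> max 0 (2 * h + 1)"
      using card_int_interval_le[of "f k - h" "f k + h"] by (simp add: Y_def)
  qed
  also have "\<dots> = real (card X) * max 0 (2 * h + 1)" by simp
  also have "\<dots> \<le> max 0 (hi - lo + 1) * max 0 (2 * h + 1)"
    using card_int_interval_le by (intro mult_right_mono) (auto simp: X_def)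
  finally show "real (card (lattice_points D)) \<le> max 0 (hi - lo + 1) * (2 * h + 1)"
    using \<open>h \<ge> 0\<close> by simp
qed

lemma lattice_points_strips_inter:
  fixes a b c d C :: real
  assumes "\<bar>a\<bar> \<le> 1" "\<bar>b\<bar> \<le> 1" "a \<noteq> b" "C \<ge> 0"
  defines "D \<equiv> strip (line a c) C \<inter> strip (line b d) C"
  shows "finite (lattice_points D)"
    and "real (card (lattice_points D)) \<le> (4 * C / \<bar>a - b\<bar> + 1) * (2 * C + 1)"
proof -
  define x0 where "x0 = (d - c) / (a - b)"
  define R where "R = 2 * C / \<bar>a - b\<bar>"
  have fibred: "x0 - R \<le> x \<and> x \<le> x0 + R \<and> \<bar>y - (a * x + c)\<bar> \<le> C" if "(x, y) \<in> D" for x y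
  proof -
    have "\<bar>y - a * x - c\<bar> \<le> C" "\<bar>y - b * x - d\<bar> \<le> C"
      using that assms(1,2,4) strip_line_vertical_dist_le by (auto simp: D_def)
    then have "\<bar>x - x0\<bar> \<le> R"
      unfolding x0_def R_def by (rule abs_sub_line_intersection_le[OF assms(3)])
    with \<open>\<bar>y - a * x - c\<bar> \<le> C\<close> show ?thesis by (simp add: abs_le_iff algebra_simps)
  qed
  show "finite (lattice_points D)" using lattice_points_fibred_bound(1)[OF fibred assms(4)] .
  have "R \<ge> 0" using assms(4) by (simp add: R_def)
  then show "real (card (lattice_points D)) \<le> (4 * C / \<bar>a - b\<bar> + 1) * (2 * C + 1)"
    using lattice_points_fibred_bound(2)[OF fibred assms(4)] by (simp add: R_def)
qed

theorem lemma2: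
  fixes C :: real
  assumes "C > 0"
  shows "\<exists>C1 > 0. \<forall>a b c d :: real. 0 \<le> a \<and> a \<le> 1 \<and> 0 \<le> b \<and> b \<le> 1 \<and> a \<noteq> b \<longrightarrow>
           finite {p :: int \<times> int. (real_of_int (fst p), real_of_int (snd p)) \<in> strip (line a c) C \<inter> strip (line b d) C} \<and>
           real (int_card (strip (line a c) C \<inter> strip (line b d) C)) \<le> C1 / \<bar>a - b\<bar>"
proof (intro exI[of _ "(4 * C + 1) * (2 * C + 1)"] conjI allI impI)
  show "(4 * C + 1) * (2 * C + 1) > 0" using assms by simp
  fix a b c d :: real
  assume ab: "0 \<le> a \<and> a \<le> 1 \<and> 0 \<le> b \<and> b \<le> 1 \<and> a \<noteq> b"
  let ?D = "strip (line a c) C \<inter> strip (line b d) C"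
  have slopes: "\<bar>a\<bar> \<le> 1" "\<bar>b\<bar> \<le> 1" "a \<noteq> b" "C \<ge> 0" and gap: "0 < \<bar>a - b\<bar>" "\<bar>a - b\<bar> \<le> 1"
    using ab assms by auto
  show "finite {p :: int \<times> int. (real_of_int (fst p), real_of_int (snd p)) \<in> ?D}"
    using lattice_points_strips_inter(1)[OF slopes] by (simp add: lattice_points_def)
  have "4 * C / \<bar>a - b\<bar> + 1 \<le> (4 * C + 1) / \<bar>a - b\<bar>"
    using gap by (simp add: add_divide_distrib)
  have "real (int_card ?D) \<le> (4 * C / \<bar>a - b\<bar> + 1) * (2 * C + 1)"
    using lattice_points_strips_inter(2)[OF slopes] by (simp add: int_card_eq_card_lattice_points)
  also have "\<dots> \<le> (4 * C + 1) / \<bar>a - b\<bar> * (2 * C + 1)"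
    using \<open>4 * C / \<bar>a - b\<bar> + 1 \<le> (4 * C + 1) / \<bar>a - b\<bar>\<close> assms by (intro mult_right_mono) auto
  finally show "real (int_card ?D) \<le> (4 * C + 1) * (2 * C + 1) / \<bar>a - b\<bar>"
    by simp
qed

end
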